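(* Let $\mathcal{P}=\langle P,\le\rangle$ be a finite bounded poset with $|P|\ge 2$ and height $H$. Let $R^+(a)=[H(\uparrow a)-1,\;H-H(\downarrow a)]$ and $R^{+}_{c}(a)=[H(\uparrow a)-1,\;H+H(\downarrow a)-2]$ for $a\in P$. Let $R^+(\mathcal{P})$ be the set $\{R^+(a):a\in P\}$ ordered by $\ge_W$, and $R^{+}_{c}(\mathcal{P})$ the set $\{R^{+}_{c}(a):a\in P\}$ ordered by $\subseteq$. Then $R^+(\mathcal{P})\cong R^{+}_{c}(\mathcal{P})$ as posets; explicitly, $[x,y]\mapsto[x,2(H-1)-y]$ is an order isomorphism.
   Context: A poset is bounded if it has a least and a greatest element. The height of a finite poset is the number of elements in its largest chain. For $a\in P$, $\uparrow a=\{b:b\ge a\}$ and $\downarrow a=\{b:b\le a\}$ as subposets, with heights $H(\uparrow a),H(\downarrow a)$. Weak order on intervals: $[x_*,x^*]\le_W[y_*,y^*]$ iff $x_*\le y_*$ and $x^*\le y^*$; $\ge_W$ is its dual. Subset order: $[x_*,x^*]\subseteq[y_*,y^*]$ iff $x_*\ge y_*$ and $x^*\le y^*$. *)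

theory Defs
  imports Main
begin

definition partial_order_on_set :: "'a set \<Rightarrow> ('a \<Rightarrow> 'a \<Rightarrow> bool) \<Rightarrow> bool" where
  "partial_order_on_set P le \<longleftrightarrow>
     (\<forall>x\<in>P. le x x) \<and>
     (\<forall>x\<in>P. \<forall>y\<in>P. le x y \<and> le y x \<longrightarrow> x = y) \<and>
     (\<forall>x\<in>P. \<forall>y\<in>P. \<forall>z\<in>P. le x y \<and> le y z \<longrightarrow> le x z)"

definition bounded_poset :: "'a set \<Rightarrow> ('a \<Rightarrow> 'a \<Rightarrow> bool) \<Rightarrow> bool" where
  "bounded_poset P le \<longleftrightarrow>
     (\<exists>b\<in>P. \<forall>x\<in>P. le b x) \<and> (\<exists>t\<in>P. \<forall>x\<in>P. le x t)"

definition is_chain :: "('a \<Rightarrow> 'a \<Rightarrow> bool) \<Rightarrow> 'a set \<Rightarrow> bool" where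
  "is_chain le C \<longleftrightarrow> (\<forall>x\<in>C. \<forall>y\<in>C. le x y \<or> le y x)"

definition height :: "('a \<Rightarrow> 'a \<Rightarrow> bool) \<Rightarrow> 'a set \<Rightarrow> nat" where
  "height le S = Max (card ` {C. C \<subseteq> S \<and> is_chain le C})"

definition up_set :: "'a set \<Rightarrow> ('a \<Rightarrow> 'a \<Rightarrow> bool) \<Rightarrow> 'a \<Rightarrow> 'a set" where
  "up_set P le a = {b\<in>P. le a b}"

definition down_set :: "'a set \<Rightarrow> ('a \<Rightarrow> 'a \<Rightarrow> bool) \<Rightarrow> 'a \<Rightarrow> 'a set" where
  "down_set P le a = {b\<in>P. le b a}"

text \<open>Intervals [x_*, x^*] are represented as pairs of integers.\<close>

definition weak_le :: "int \<times> int \<Rightarrow> int \<times> int \<Rightarrow> bool" where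
  "weak_le u v \<longleftrightarrow> fst u \<le> fst v \<and> snd u \<le> snd v"

definition weak_ge :: "int \<times> int \<Rightarrow> int \<times> int \<Rightarrow> bool" where
  "weak_ge u v \<longleftrightarrow> weak_le v u"

definition interval_subset :: "int \<times> int \<Rightarrow> int \<times> int \<Rightarrow> bool" where
  "interval_subset u v \<longleftrightarrow> fst u \<ge> fst v \<and> snd u \<le> snd v"

definition R_plus :: "'a set \<Rightarrow> ('a \<Rightarrow> 'a \<Rightarrow> bool) \<Rightarrow> 'a \<Rightarrow> int \<times> int" where
  "R_plus P le a =
     (int (height le (up_set P le a)) - 1,
      int (height le P) - int (height le (down_set P le a)))"

definition R_plus_c :: "'a set \<Rightarrow> ('a \<Rightarrow> 'a \<Rightarrow> bool) \<Rightarrow> 'a \<Rightarrow> int \<times> int" where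
  "R_plus_c P le a =
     (int (height le (up_set P le a)) - 1,
      int (height le P) + int (height le (down_set P le a)) - 2)"

definition order_iso_betw ::
  "('x \<Rightarrow> 'y) \<Rightarrow> 'x set \<Rightarrow> ('x \<Rightarrow> 'x \<Rightarrow> bool) \<Rightarrow> 'y set \<Rightarrow> ('y \<Rightarrow> 'y \<Rightarrow> bool) \<Rightarrow> bool" where
  "order_iso_betw f A r B s \<longleftrightarrow>
     bij_betw f A B \<and> (\<forall>u\<in>A. \<forall>v\<in>A. r u v \<longleftrightarrow> s (f u) (f v))"

end

theory Submission
  imports Defs
begin

text \<open>Reflecting the upper endpoint of every interval about \<open>c / 2\<close> turns the
  dual weak order into inclusion, on all integer intervals at once. With \<open>c = 2 (H - 1)\<close>
  the upper endpoint \<open>H - H(\<down>a)\<close> of \<open>R\<^sup>+(a)\<close> becomes \<open>H + H(\<down>a) - 2\<close>, the upper endpoint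
  of \<open>R\<^sup>+\<^sub>c(a)\<close>, so the reflection maps the one family of intervals onto the other.\<close>

definition reflect_upper :: "int \<Rightarrow> int \<times> int \<Rightarrow> int \<times> int" where
  "reflect_upper c = (\<lambda>(x, y). (x, c - y))"

lemma inj_reflect_upper: "inj (reflect_upper c)"
  by (auto simp: inj_def reflect_upper_def)

lemma weak_ge_iff_interval_subset_reflect_upper:
  "weak_ge u v \<longleftrightarrow> interval_subset (reflect_upper c u) (reflect_upper c v)"
  by (cases u; cases v) (auto simp: reflect_upper_def weak_ge_def weak_le_def interval_subset_def)

lemma reflect_upper_R_plus:
  "reflect_upper (2 * (int (height le P) - 1)) (R_plus P le a) = R_plus_c P le a"
  by (simp add: reflect_upper_def R_plus_def R_plus_c_def)

lemma order_iso_betw_image: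
  assumes "inj_on f A" and "\<And>u v. u \<in> A \<Longrightarrow> v \<in> A \<Longrightarrow> r u v \<longleftrightarrow> s (f u) (f v)"
  shows "order_iso_betw f A r (f ` A) s"
  using assms by (simp add: order_iso_betw_def inj_on_imp_bij_betw)

theorem proposition4:
  fixes P :: "'a set" and le :: "'a \<Rightarrow> 'a \<Rightarrow> bool"
  assumes "finite P"
    and "partial_order_on_set P le"
    and "bounded_poset P le"
    and "card P \<ge> 2"
  shows "order_iso_betw
           (\<lambda>(x, y). (x, 2 * (int (height le P) - 1) - y))
           (R_plus P le ` P) weak_ge
           (R_plus_c P le ` P) interval_subset"
proof -
  let ?f = "reflect_upper (2 * (int (height le P) - 1))"
  have "?f ` R_plus P le ` P = R_plus_c P le ` P"
    unfolding image_image reflect_upper_R_plus ..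
  moreover have "order_iso_betw ?f (R_plus P le ` P) weak_ge (?f ` R_plus P le ` P) interval_subset"
    using inj_on_subset[OF inj_reflect_upper subset_UNIV] weak_ge_iff_interval_subset_reflect_upper
    by (rule order_iso_betw_image)
  ultimately show ?thesis
    by (simp add: reflect_upper_def)
qed

end
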